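(* Let $V$ be a finite-dimensional complex vector space and $K\subseteq\bigwedge^2V$ a subspace. If $[a\wedge b]$ is an isolated point of $\mathbf{P}K^\perp\cap\mathrm{Gr}_2(V^\vee)$, then the line $\ell_{ab}\subseteq\mathbf{P}V^\vee$ through $[a]$ and $[b]$ is a connected component of the projectivized resonance variety $\mathbf{R}(V,K)$, and the span of $a,b$ is isotropic.
   Context: $K^\perp\subseteq\bigwedge^2V^\vee$ is the annihilator of $K$; $\mathrm{Gr}_2(V^\vee)\subseteq\mathbf{P}(\bigwedge^2V^\vee)$ is Plücker embedded. The resonance variety is $\mathcal{R}(V,K)=\{a\in V^\vee:\exists b\in V^\vee,\ a\wedge b\in K^\perp\setminus\{0\}\}\cup\{0\}$, and $\mathbf{R}(V,K)\subseteq\mathbf{P}V^\vee$ is its projectivization (the union of the lines $\ell_{ab}$ for $[a\wedge b]\in\mathbf{P}K^\perp\cap\mathrm{Gr}_2(V^\vee)$). A subspace $\overline{V}^\vee\subseteq V^\vee$ is isotropic if $\bigwedge^2\overline V^\vee\subseteq K^\perp$. *)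

theory Defs
  imports "HOL-Analysis.Analysis"
begin

text \<open>Choosing a basis of V (dim n, indexed by the finite type 'n), the dual
  V^vee is modelled by complex ^ 'n. Both exterior squares are modelled as antisymmetric
  arrays complex ^ ('n * 'n): the element w of wedge^2 V^vee has coordinates w(i,j) = w(e_i,e_j),
  the element k of wedge^2 V has coordinates k(i,j) w.r.t. the basis e_i wedge e_j (antisymmetrised).
  The natural pairing is (1/2) * sum_{i,j} w(i,j) k(i,j); the factor is irrelevant for annihilators.\<close>

definition alt :: "complex ^ ('n::finite \<times> 'n) \<Rightarrow> bool" where
  "alt w \<longleftrightarrow> (\<forall>i j. w $ (i, j) = - w $ (j, i))"

definition Alt2 :: "(complex ^ ('n::finite \<times> 'n)) set" where
  "Alt2 = {w. alt w}"

definition wedge :: "complex ^ 'n::finite \<Rightarrow> complex ^ 'n::finite \<Rightarrow> complex ^ ('n::finite \<times> 'n)" where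
  "wedge a b = (\<chi> p. a $ fst p * b $ snd p - a $ snd p * b $ fst p)"

definition pairing :: "complex ^ ('n::finite \<times> 'n) \<Rightarrow> complex ^ ('n::finite \<times> 'n) \<Rightarrow> complex" where
  "pairing w k = (\<Sum>p\<in>UNIV. w $ p * k $ p)"

definition csubspace :: "(complex ^ 'k::finite) set \<Rightarrow> bool" where
  "csubspace S \<longleftrightarrow> 0 \<in> S \<and> (\<forall>x\<in>S. \<forall>y\<in>S. x + y \<in> S) \<and> (\<forall>c::complex. \<forall>x\<in>S. c *s x \<in> S)"

definition perp :: "(complex ^ ('n::finite \<times> 'n)) set \<Rightarrow> (complex ^ ('n::finite \<times> 'n)) set" where
  "perp K = {w \<in> Alt2. \<forall>k\<in>K. pairing w k = 0}"

definition span2 :: "complex ^ 'k::finite \<Rightarrow> complex ^ 'k::finite \<Rightarrow> (complex ^ 'k::finite) set" where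
  "span2 a b = {c *s a + d *s b | c d :: complex. True}"

definition pt :: "complex ^ 'k::finite \<Rightarrow> (complex ^ 'k::finite) set" where
  "pt v = {c *s v | c :: complex. True}"

definition PP :: "(complex ^ 'k::finite) set \<Rightarrow> (complex ^ 'k::finite) set set" where
  "PP S = {pt v | v. v \<in> S \<and> v \<noteq> 0}"

text \<open>the (classical) topology of P(W): quotient topology of W - {0}\<close>
definition proj_topology :: "(complex ^ 'k::finite) set topology" where
  "proj_topology = topology (\<lambda>U. U \<subseteq> PP UNIV \<and> open {v. v \<noteq> 0 \<and> pt v \<in> U})"

text \<open>Gr_2(V^vee) in P(wedge^2 V^vee) via the Pluecker embedding\<close>
definition Gr2 :: "(complex ^ ('n::finite \<times> 'n)) set set" where
  "Gr2 = PP {wedge a b | a b. True}"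

definition resonance :: "(complex ^ ('n::finite \<times> 'n)) set \<Rightarrow> (complex ^ 'n::finite) set" where
  "resonance K = {a. \<exists>b. wedge a b \<in> perp K - {0}} \<union> {0}"

definition Presonance :: "(complex ^ ('n::finite \<times> 'n)) set \<Rightarrow> (complex ^ 'n::finite) set set" where
  "Presonance K = PP (resonance K)"

text \<open>isotropic subspace: wedge^2 W subset of K^perp (wedge^2 W is spanned by the x wedge y)\<close>
definition isotropic :: "(complex ^ ('n::finite \<times> 'n)) set \<Rightarrow> (complex ^ 'n::finite) set \<Rightarrow> bool" where
  "isotropic K W \<longleftrightarrow> (\<forall>x\<in>W. \<forall>y\<in>W. wedge x y \<in> perp K)"

definition isolated_point_of :: "'a topology \<Rightarrow> 'a set \<Rightarrow> 'a \<Rightarrow> bool" where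
  "isolated_point_of T X x \<longleftrightarrow> x \<in> X \<and> (\<exists>U. openin T U \<and> U \<inter> X = {x})"

end

(*
  Write w = a \<and> b. If x lies in span(a, b), x \<noteq> 0 and x \<and> y \<in> K^perp, choose b' with
  x \<and> b' = w; then w + t (x \<and> y) = x \<and> (b' + t y) is a decomposable element of K^perp
  tending to w as t \<rightarrow> 0, so isolation of [w] forces x \<and> y to be a multiple of w.
  Normalising the partner y to the unit sphere and using compactness, the same holds
  near x: every resonant v close to a point of the line has its wedges v \<and> y \<in> K^perp
  proportional to w, hence lies in span(a, b). So the line is open in the resonance
  variety; being closed and connected, it is a connected component. Isotropy is
  immediate, as every wedge of two vectors of span(a, b) is a multiple of w.
*)

theory Submission
  imports Defs
begin

section \<open>Scaling-invariant sets and their projectivisations\<close>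

definition scaling_invariant :: "(complex ^ 'k::finite) set \<Rightarrow> bool" where
  "scaling_invariant S \<longleftrightarrow> (\<forall>c v. c \<noteq> 0 \<longrightarrow> v \<in> S \<longrightarrow> c *s v \<in> S)"

lemma scaling_invariantD: "scaling_invariant S \<Longrightarrow> c \<noteq> 0 \<Longrightarrow> v \<in> S \<Longrightarrow> c *s v \<in> S"
  unfolding scaling_invariant_def by blast

lemma scaling_invariant_smult_iff:
  assumes "scaling_invariant S" "c \<noteq> 0"
  shows "c *s v \<in> S \<longleftrightarrow> v \<in> S"
  using scaling_invariantD[OF assms] scaling_invariantD[OF assms(1), of "inverse c" "c *s v"] assms(2)
  by (auto simp: vector_smult_assoc)

lemma scaling_invariant_Compl: "scaling_invariant S \<Longrightarrow> scaling_invariant (- S)"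
  by (simp add: scaling_invariant_def scaling_invariant_smult_iff)

lemma scaling_invariant_Int:
  "scaling_invariant S \<Longrightarrow> scaling_invariant T \<Longrightarrow> scaling_invariant (S \<inter> T)"
  by (simp add: scaling_invariant_def)

lemma scaling_invariant_Diff:
  "scaling_invariant S \<Longrightarrow> scaling_invariant T \<Longrightarrow> scaling_invariant (S - T)"
  by (simp add: Diff_eq scaling_invariant_Int scaling_invariant_Compl)

lemma continuous_on_vector_smult [continuous_intros]:
  fixes g :: "_ \<Rightarrow> complex ^ 'k::finite"
  assumes "continuous_on S f" "continuous_on S g"
  shows "continuous_on S (\<lambda>x. f x *s g x)"
proof -
  have eq: "(\<lambda>x. f x *s g x) = (\<lambda>x. \<chi> i. f x * g x $ i)"
    by (rule ext) (simp add: vec_eq_iff)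
  show ?thesis
    unfolding eq using assms by (intro continuous_on_vec_lambda continuous_on_mult continuous_on_component)
qed

lemma scaling_invariant_closure:
  assumes "scaling_invariant S"
  shows "scaling_invariant (closure S)"
  unfolding scaling_invariant_def
proof (intro allI impI)
  fix c :: complex and v
  assume "c \<noteq> 0" "v \<in> closure S"
  have "(\<lambda>v. c *s v) ` closure S \<subseteq> closure S"
    using scaling_invariantD[OF assms \<open>c \<noteq> 0\<close>] closure_subset
    by (intro image_closure_subset continuous_on_vector_smult continuous_on_const continuous_on_id) auto
  then show "c *s v \<in> closure S" using \<open>v \<in> closure S\<close> by blast
qed

lemma pt_self: "v \<in> pt v"
  unfolding pt_def by (auto intro: exI[of _ 1])

lemma pt_0: "pt 0 = {0}"
  by (simp add: pt_def)

lemma pt_smult: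
  assumes "c \<noteq> 0"
  shows "pt (c *s v) = pt v"
  unfolding pt_def
proof (intro set_eqI iffI)
  fix x assume "x \<in> {d *s (c *s v) |d. True}"
  then obtain d where "x = d *s (c *s v)" by blast
  then have "x = (d * c) *s v" by (simp add: vector_smult_assoc)
  then show "x \<in> {d *s v |d. True}" by blast
next
  fix x assume "x \<in> {d *s v |d. True}"
  then obtain d where "x = d *s v" by blast
  then have "x = (d / c) *s (c *s v)" using assms by (simp add: vector_smult_assoc)
  then show "x \<in> {d *s (c *s v) |d. True}" by blast
qed

lemma pt_eq_pt_imp_smult:
  assumes "pt v = pt u" "u \<noteq> 0"
  obtains c where "c \<noteq> 0" "v = c *s u"
proof -
  obtain c where c: "v = c *s u" using pt_self[of v] assms(1) by (auto simp: pt_def)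
  have "c \<noteq> 0"
  proof
    assume "c = 0"
    then have "pt v = {0}" using c by (simp add: pt_0)
    then show False using pt_self[of u] assms by simp
  qed
  then show ?thesis using c that by blast
qed

lemma pt_in_PP: "v \<in> S \<Longrightarrow> v \<noteq> 0 \<Longrightarrow> pt v \<in> PP S"
  unfolding PP_def by blast

lemma pt_in_PP_iff:
  assumes "scaling_invariant S" "v \<noteq> 0"
  shows "pt v \<in> PP S \<longleftrightarrow> v \<in> S"
proof
  assume "pt v \<in> PP S"
  then obtain u where "pt v = pt u" "u \<in> S" "u \<noteq> 0" unfolding PP_def by blast
  moreover obtain c where "c \<noteq> 0" "v = c *s u"
    using pt_eq_pt_imp_smult[OF calculation(1,3)] .
  ultimately show "v \<in> S" using scaling_invariantD[OF assms(1)] by simp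
qed (use assms(2) pt_in_PP in blast)

lemma PP_mono: "S \<subseteq> T \<Longrightarrow> PP S \<subseteq> PP T"
  unfolding PP_def by blast

lemma PP_eq_image: "PP S = pt ` (S - {0})"
  unfolding PP_def by blast

lemma PP_cong_nonzero: "S - {0} = T - {0} \<Longrightarrow> PP S = PP T"
  by (simp add: PP_eq_image)

lemma PP_Int:
  assumes "scaling_invariant T"
  shows "PP (S \<inter> T) = PP S \<inter> PP T"
proof
  show "PP S \<inter> PP T \<subseteq> PP (S \<inter> T)"
  proof
    fix p assume p: "p \<in> PP S \<inter> PP T"
    then obtain v where v: "p = pt v" "v \<in> S" "v \<noteq> 0" unfolding PP_def by blast
    then have "v \<in> T" using p pt_in_PP_iff[OF assms] by blast
    then show "p \<in> PP (S \<inter> T)" using v pt_in_PP by blast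
  qed
qed (simp add: PP_mono)

section \<open>The topology of projective space\<close>

lemma openin_proj_topology:
  fixes U :: "(complex ^ 'k::finite) set set"
  shows "openin proj_topology U \<longleftrightarrow> U \<subseteq> PP UNIV \<and> open {v. v \<noteq> 0 \<and> pt v \<in> U}"
proof -
  define pre :: "(complex ^ 'k) set set \<Rightarrow> (complex ^ 'k) set"
    where "pre U = {v. v \<noteq> 0 \<and> pt v \<in> U}" for U
  have "pre (S \<inter> T) = pre S \<inter> pre T" "pre (\<Union>\<U>) = (\<Union>U\<in>\<U>. pre U)" for S T \<U>
    unfolding pre_def by blast+
  then have "istopology (\<lambda>U. U \<subseteq> PP UNIV \<and> open (pre U))"
    unfolding istopology_def by (simp add: open_Int open_UN Union_least le_infI1)
  then show ?thesis
    unfolding proj_topology_def pre_def by simp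
qed

lemma topspace_proj_topology: "topspace (proj_topology :: (complex ^ 'k::finite) set topology) = PP UNIV"
proof -
  have "{v :: complex ^ 'k. v \<noteq> 0 \<and> pt v \<in> PP UNIV} = - {0}"
    by (auto simp: pt_in_PP)
  then have "openin proj_topology (PP (UNIV :: (complex ^ 'k) set))"
    unfolding openin_proj_topology by (metis open_Compl closed_singleton order_refl)
  moreover have "topspace proj_topology \<subseteq> PP (UNIV :: (complex ^ 'k) set)"
    using openin_topspace[of "proj_topology :: (complex ^ 'k) set topology"]
    unfolding openin_proj_topology by (rule conjunct1)
  ultimately show ?thesis
    using openin_subset by blast
qed

lemma openin_proj_topology_PP:
  assumes "scaling_invariant S" "open (S - {0})"
  shows "openin proj_topology (PP S)"
proof -
  have "{v. v \<noteq> 0 \<and> pt v \<in> PP S} = S - {0}"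
    by (auto simp: pt_in_PP_iff[OF assms(1)])
  then show ?thesis
    using assms(2) PP_mono[of S UNIV] by (simp add: openin_proj_topology)
qed

lemma closedin_proj_topology_PP:
  assumes "scaling_invariant S" "closed (insert 0 S)"
  shows "closedin proj_topology (PP S)"
proof -
  have "PP UNIV - PP S = PP (- S)"
  proof (intro set_eqI iffI)
    fix p assume "p \<in> PP UNIV - PP S"
    then obtain v where "p = pt v" "v \<noteq> 0" "pt v \<notin> PP S" unfolding PP_def by blast
    then show "p \<in> PP (- S)" using pt_in_PP[of v "- S"] pt_in_PP by blast
  next
    fix p assume "p \<in> PP (- S)"
    then obtain v where "p = pt v" "v \<noteq> 0" "v \<notin> S" unfolding PP_def by blast
    then show "p \<in> PP UNIV - PP S" using pt_in_PP_iff[OF assms(1)] pt_in_PP[of v UNIV] by simp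
  qed
  moreover have "- S - {0} = - insert 0 S"
    by blast
  ultimately have "openin proj_topology (PP UNIV - PP S)"
    using assms by (simp add: openin_proj_topology_PP scaling_invariant_Compl open_Compl)
  then show ?thesis
    by (simp add: closedin_def topspace_proj_topology PP_mono)
qed

lemma continuous_map_pt:
  "continuous_map (top_of_set (- {0})) proj_topology (pt :: complex ^ 'k::finite \<Rightarrow> _)"
proof -
  have "openin (top_of_set (- {0})) {v \<in> - {0}. pt v \<in> U}"
    if "openin proj_topology U" for U :: "(complex ^ 'k) set set"
  proof -
    have "open {v. v \<noteq> 0 \<and> pt v \<in> U}"
      using that by (simp add: openin_proj_topology)
    then have "openin (top_of_set (- {0})) (- {0} \<inter> {v. v \<noteq> 0 \<and> pt v \<in> U})"
      by (rule openin_open_Int)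
    moreover have "{v \<in> - {0}. pt v \<in> U} = - {0} \<inter> {v. v \<noteq> 0 \<and> pt v \<in> U}"
      by blast
    ultimately show ?thesis
      by (simp only:)
  qed
  moreover have "pt v \<in> PP UNIV" if "v \<noteq> 0" for v :: "complex ^ 'k"
    using that by (rule pt_in_PP[OF UNIV_I])
  ultimately show ?thesis
    by (auto simp: continuous_map_def topspace_proj_topology)
qed

lemma connectedin_proj_topology_PP:
  assumes "connected (S - {0})"
  shows "connectedin proj_topology (PP S)"
  unfolding PP_eq_image
  by (rule connectedin_continuous_map_image[OF continuous_map_pt])
    (use assms in \<open>auto simp: connectedin_subtopology\<close>)

lemma clopen_connectedin_in_connected_components_of:
  assumes "connectedin X C" "C \<noteq> {}" "openin X C" "closedin X C"
  shows "C \<in> connected_components_of X"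
proof -
  obtain x where "x \<in> C" using assms(2) by blast
  then have "x \<in> topspace X" using assms(3) openin_subset by blast
  define D where "D = connected_component_of_set X x"
  have "C \<subseteq> D"
    unfolding D_def by (rule connected_component_of_maximal[OF assms(1) \<open>x \<in> C\<close>])
  moreover have "x \<in> D"
    using \<open>x \<in> topspace X\<close> by (simp add: D_def connected_component_of_refl)
  then have "D \<subseteq> C"
    using connectedin_clopen_cases[OF connectedin_connected_component_of assms(4,3)] \<open>x \<in> C\<close>
    unfolding D_def disjnt_iff by blast
  ultimately have "C = D" by blast
  then show ?thesis
    using \<open>x \<in> topspace X\<close> by (simp add: D_def connected_component_in_connected_components_of)
qed

section \<open>Decomposable 2-vectors\<close>

lemma wedge_nth: "wedge a b $ (i, j) = a $ i * b $ j - a $ j * b $ i"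
  by (simp add: wedge_def)

lemma wedge_lincomb:
  "wedge (c *s a + d *s b) (c' *s a + d' *s b) = (c * d' - d * c') *s wedge a b"
  by (simp add: vec_eq_iff wedge_def algebra_simps)

lemma wedge_smult_left: "wedge (c *s x) y = c *s wedge x y"
  by (simp add: vec_eq_iff wedge_def algebra_simps)

lemma wedge_smult_right: "wedge x (c *s y) = c *s wedge x y"
  by (simp add: vec_eq_iff wedge_def algebra_simps)

lemma wedge_add_right: "wedge x (y + z) = wedge x y + wedge x z"
  by (simp add: vec_eq_iff wedge_def algebra_simps)

lemma wedge_diff_right: "wedge x (y - z) = wedge x y - wedge x z"
  by (simp add: vec_eq_iff wedge_def algebra_simps)

lemma wedge_self: "wedge x x = 0"
  by (simp add: vec_eq_iff wedge_def)

lemma wedge_0_left [simp]: "wedge 0 y = 0"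
  and wedge_0_right [simp]: "wedge x 0 = 0"
  by (simp_all add: vec_eq_iff wedge_def)

lemma continuous_on_wedge [continuous_intros]:
  "continuous_on S f \<Longrightarrow> continuous_on S g \<Longrightarrow> continuous_on S (\<lambda>x. wedge (f x) (g x))"
  unfolding wedge_def
  by (intro continuous_on_vec_lambda continuous_on_diff continuous_on_mult continuous_on_component)

lemma wedge_nonzero_if_coordinate:
  assumes "x $ i \<noteq> 0" "y $ i = 0" "y \<noteq> 0"
  shows "wedge x y \<noteq> 0"
proof -
  obtain j where "y $ j \<noteq> 0" using assms(3) by (metis vec_eq_iff zero_index)
  then have "wedge x y $ (i, j) \<noteq> 0" using assms(1,2) by (simp add: wedge_nth)
  then show ?thesis by auto
qed

text \<open>The coordinate form of \<open>u \<and> u \<and> v = 0\<close>.\<close>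

lemma wedge_cyclic:
  "wedge u v $ (i, j) * u $ l + wedge u v $ (j, l) * u $ i + wedge u v $ (l, i) * u $ j = 0"
  by (simp add: wedge_nth algebra_simps)

lemma in_span2_if_cyclic:
  assumes nonzero: "wedge a b $ (i, j) \<noteq> 0"
    and cyc: "\<And>l. wedge a b $ (i, j) * x $ l + wedge a b $ (j, l) * x $ i + wedge a b $ (l, i) * x $ j = 0"
  shows "x \<in> span2 a b"
proof -
  define D where "D = wedge a b $ (i, j)"
  define c where "c = (x $ i * b $ j - x $ j * b $ i) / D"
  define d where "d = (a $ i * x $ j - a $ j * x $ i) / D"
  have "x = c *s a + d *s b"
  proof (subst vec_eq_iff, rule allI)
    fix l
    have "D * x $ l = - (wedge a b $ (j, l) * x $ i + wedge a b $ (l, i) * x $ j)"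
      using cyc[of l] unfolding D_def eq_neg_iff_add_eq_0 by (simp only: add.assoc)
    also have "\<dots> = (x $ i * b $ j - x $ j * b $ i) * a $ l + (a $ i * x $ j - a $ j * x $ i) * b $ l"
      by (simp add: wedge_nth algebra_simps)
    also have "\<dots> = D * (c * a $ l + d * b $ l)"
      using nonzero by (simp add: D_def c_def d_def distrib_left)
    finally show "x $ l = (c *s a + d *s b) $ l"
      using nonzero by (simp add: D_def)
  qed
  then show ?thesis unfolding span2_def by blast
qed

lemma wedge_eq_smult_imp_in_span2:
  assumes "wedge u v = c *s wedge a b" "wedge u v \<noteq> 0"
  shows "u \<in> span2 a b"
proof -
  have "c \<noteq> 0" "wedge a b \<noteq> 0" using assms by auto
  then obtain i j where ij: "wedge a b $ (i, j) \<noteq> 0" by (metis vec_eq_iff zero_index surj_pair)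
  show ?thesis
  proof (rule in_span2_if_cyclic[OF ij])
    fix l
    have "c * (wedge a b $ (i, j) * u $ l + wedge a b $ (j, l) * u $ i + wedge a b $ (l, i) * u $ j) = 0"
      using wedge_cyclic[of u v i j l] unfolding assms(1) by (simp add: algebra_simps)
    then show "wedge a b $ (i, j) * u $ l + wedge a b $ (j, l) * u $ i + wedge a b $ (l, i) * u $ j = 0"
      using \<open>c \<noteq> 0\<close> by simp
  qed
qed

lemma span2_0: "0 \<in> span2 a b"
  unfolding span2_def by (rule CollectI, rule exI[of _ 0], rule exI[of _ 0]) simp

lemma left_in_span2: "a \<in> span2 a b"
  unfolding span2_def by (rule CollectI, rule exI[of _ 1], rule exI[of _ 0]) simp

lemma span2_add:
  assumes "x \<in> span2 a b" "y \<in> span2 a b"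
  shows "x + y \<in> span2 a b"
proof -
  obtain c d c' d' where "x = c *s a + d *s b" "y = c' *s a + d' *s b"
    using assms unfolding span2_def by blast
  then have "x + y = (c + c') *s a + (d + d') *s b"
    by (simp add: vector_sadd_rdistrib algebra_simps)
  then show ?thesis unfolding span2_def by blast
qed

lemma span2_smult:
  assumes "x \<in> span2 a b"
  shows "e *s x \<in> span2 a b"
proof -
  obtain c d where "x = c *s a + d *s b"
    using assms unfolding span2_def by blast
  then have "e *s x = (e * c) *s a + (e * d) *s b"
    by (simp add: vector_add_ldistrib vector_smult_assoc)
  then show ?thesis unfolding span2_def by blast
qed

lemma scaling_invariant_span2: "scaling_invariant (span2 a b)"
  by (simp add: scaling_invariant_def span2_smult)

lemma scaleR_vec_eq_smult: "r *\<^sub>R (x :: complex ^ 'k::finite) = complex_of_real r *s x"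
proof (rule vec_eq_iff[THEN iffD2], rule allI)
  fix i
  have "(r *\<^sub>R x) $ i = r *\<^sub>R x $ i" by simp
  also have "\<dots> = complex_of_real r * x $ i" by (rule scaleR_conv_of_real)
  finally show "(r *\<^sub>R x) $ i = (complex_of_real r *s x) $ i" by simp
qed

lemma closed_span2:
  fixes a b :: "complex ^ 'k::finite"
  shows "closed (span2 a b)"
proof (rule closed_subspace)
  show "subspace (span2 a b)"
    unfolding subspace_def by (simp add: scaleR_vec_eq_smult span2_0 span2_add span2_smult)
qed

lemma wedge_span2:
  assumes "x \<in> span2 a b" "y \<in> span2 a b"
  obtains c where "wedge x y = c *s wedge a b"
proof -
  obtain c d c' d' where "x = c *s a + d *s b" "y = c' *s a + d' *s b"
    using assms unfolding span2_def by blast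
  then have "wedge x y = (c * d' - d * c') *s wedge a b"
    by (simp only: wedge_lincomb)
  then show ?thesis by (rule that)
qed

lemma ex_wedge_eq_if_in_span2:
  assumes "x \<in> span2 a b" "x \<noteq> 0"
  obtains y where "wedge x y = wedge a b"
proof -
  obtain c d where x: "x = c *s a + d *s b" using assms(1) unfolding span2_def by blast
  show ?thesis
  proof (cases "c = 0")
    case True
    then have "d \<noteq> 0" using assms(2) x by auto
    have "wedge x (- inverse d *s a + 0 *s b) = wedge a b"
      unfolding x wedge_lincomb using True \<open>d \<noteq> 0\<close> by simp
    then show ?thesis by (rule that)
  next
    case False
    have "wedge x (0 *s a + inverse c *s b) = wedge a b"
      unfolding x wedge_lincomb using False by simp
    then show ?thesis by (rule that)
  qed
qed

lemma wedge_nonzero_imp_independent: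
  assumes "wedge a b \<noteq> 0" "c *s a + d *s b = 0"
  shows "c = 0 \<and> d = 0"
proof
  show "c = 0" using wedge_lincomb[of c a d b 0 1] assms by simp
  show "d = 0" using wedge_lincomb[of c a d b 1 0] assms by simp
qed

lemma connected_span2_minus_0:
  fixes a b :: "complex ^ 'k::finite"
  assumes "wedge a b \<noteq> 0"
  shows "connected (span2 a b - {0})"
proof -
  define f :: "complex \<times> complex \<Rightarrow> complex ^ 'k" where "f p = fst p *s a + snd p *s b" for p
  have eq: "span2 a b - {0} = f ` (- {0})"
  proof (intro set_eqI iffI)
    fix x assume "x \<in> span2 a b - {0}"
    then obtain c d where "x = f (c, d)" "x \<noteq> 0"
      unfolding span2_def f_def by auto
    then have "(c, d) \<noteq> 0" by (auto simp: f_def zero_prod_def)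
    then show "x \<in> f ` (- {0})" using \<open>x = f (c, d)\<close> by blast
  next
    fix x assume "x \<in> f ` (- {0})"
    then obtain p where p: "p \<noteq> 0" "x = f p" by blast
    have "x \<noteq> 0"
    proof
      assume "x = 0"
      then have "fst p = 0 \<and> snd p = 0"
        using wedge_nonzero_imp_independent[OF assms] p(2) by (simp add: f_def)
      then show False using p(1) by (simp add: prod_eq_iff)
    qed
    moreover have "x \<in> span2 a b" using p(2) unfolding f_def span2_def by blast
    ultimately show "x \<in> span2 a b - {0}" by blast
  qed
  have cont: "continuous_on UNIV f"
    unfolding f_def
    by (intro continuous_on_add continuous_on_vector_smult continuous_on_fst continuous_on_snd
        continuous_on_id continuous_on_const)
  have conn: "connected (- {0 :: complex \<times> complex})"
    by (simp add: path_connected_punctured_universe path_connected_imp_connected)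
  show ?thesis
    unfolding eq by (rule connected_continuous_image[OF continuous_on_subset[OF cont subset_UNIV] conn])
qed

lemma alt_smult:
  assumes "alt w"
  shows "alt (c *s w)"
  unfolding alt_def
proof (intro allI)
  fix i j
  have "w $ (i, j) = - w $ (j, i)" using assms unfolding alt_def by blast
  then show "(c *s w) $ (i, j) = - (c *s w) $ (j, i)" by simp
qed

lemma alt_add:
  assumes "alt w" "alt w'"
  shows "alt (w + w')"
  unfolding alt_def
proof (intro allI)
  fix i j
  have "w $ (i, j) = - w $ (j, i)" "w' $ (i, j) = - w' $ (j, i)"
    using assms unfolding alt_def by blast+
  then show "(w + w') $ (i, j) = - (w + w') $ (j, i)" by simp
qed

lemma pairing_smult: "pairing (c *s w) k = c * pairing w k"
  by (simp add: pairing_def sum_distrib_left mult.assoc)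

lemma pairing_add: "pairing (w + w') k = pairing w k + pairing w' k"
  by (simp add: pairing_def distrib_right sum.distrib)

lemma perp_smult: "w \<in> perp K \<Longrightarrow> c *s w \<in> perp K"
  unfolding perp_def Alt2_def by (simp add: alt_smult pairing_smult)

lemma perp_add: "w \<in> perp K \<Longrightarrow> w' \<in> perp K \<Longrightarrow> w + w' \<in> perp K"
  unfolding perp_def Alt2_def by (simp add: alt_add pairing_add)

lemma scaling_invariant_perp: "scaling_invariant (perp K)"
  by (simp add: scaling_invariant_def perp_smult)

lemma closed_perp: "closed (perp K)"
proof -
  have "perp K = (\<Inter>i j. {w. w $ (i, j) = - w $ (j, i)}) \<inter> (\<Inter>k\<in>K. {w. pairing w k = 0})"
    unfolding perp_def Alt2_def alt_def by blast
  moreover have "continuous_on UNIV (\<lambda>w. pairing w k)" for k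
    unfolding pairing_def by (intro continuous_on_sum continuous_on_mult continuous_on_component continuous_on_const continuous_on_id)
  ultimately show ?thesis
    by (auto intro!: closed_Int closed_INT closed_Collect_eq continuous_on_component continuous_on_minus continuous_on_id continuous_on_const)
qed

lemma scaling_invariant_resonance: "scaling_invariant (resonance K)"
  unfolding scaling_invariant_def resonance_def
  by (auto simp: wedge_smult_left perp_smult)

lemma normalize_wedge_factor:
  assumes "v $ i \<noteq> 0" "wedge v y \<noteq> 0"
  obtains y' c where "norm y' = 1" "y' $ i = 0" "c \<noteq> 0" "wedge v y' = c *s wedge v y"
proof -
  define y1 where "y1 = y - (y $ i / v $ i) *s v"
  have y1: "wedge v y1 = wedge v y" "y1 $ i = 0"
    using assms(1) by (simp_all add: y1_def wedge_diff_right wedge_smult_right wedge_self)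
  then have "y1 \<noteq> 0" using assms(2) by auto
  define c where "c = complex_of_real (inverse (norm y1))"
  have "c *s y1 = inverse (norm y1) *\<^sub>R y1"
    by (simp add: c_def scaleR_vec_eq_smult)
  then have "norm (c *s y1) = 1" using \<open>y1 \<noteq> 0\<close> by simp
  moreover have "c \<noteq> 0" using \<open>y1 \<noteq> 0\<close> by (simp add: c_def)
  ultimately show ?thesis
    using that[of "c *s y1" c] y1 by (simp add: wedge_smult_right)
qed

lemma closed_wedge_unit_partner:
  fixes C :: "(complex ^ ('k::finite \<times> 'k)) set"
  assumes "closed C"
  shows "closed {v. \<exists>y. norm y = 1 \<and> y $ i = 0 \<and> wedge v y \<in> C}"
proof -
  define S :: "(complex ^ 'k) set" where "S = sphere 0 1 \<inter> {y. y $ i = 0}"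
  have "compact S"
    unfolding S_def
    by (intro compact_Int_closed compact_sphere closed_Collect_eq continuous_on_component
        continuous_on_id continuous_on_const)
  moreover have "closed ((\<lambda>(y, v). wedge v y) -` C)"
    by (intro closed_vimage assms)
      (simp add: case_prod_beta continuous_on_wedge continuous_on_fst continuous_on_snd continuous_on_id)
  ultimately have "closed {v. \<exists>y. y \<in> S \<and> (y, v) \<in> (\<lambda>(y, v). wedge v y) -` C}"
    by (rule closed_compact_projection)
  moreover have "{v. \<exists>y. y \<in> S \<and> (y, v) \<in> (\<lambda>(y, v). wedge v y) -` C}
      = {v. \<exists>y. norm y = 1 \<and> y $ i = 0 \<and> wedge v y \<in> C}"
    by (auto simp: S_def)
  ultimately show ?thesis
    by simp
qed

section \<open>An isolated point of the Pluecker image\<close>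

text \<open>\<open>N\<close> is the cone over a neighbourhood of \<open>[a \<and> b]\<close> in \<open>P(\<And>\<^sup>2 V\<^sup>\<or>)\<close> that witnesses
  the isolation: its only decomposable elements of \<open>K\<^sup>\<bottom>\<close> are multiples of \<open>a \<and> b\<close>.\<close>

locale isolated_decomposable =
  fixes K :: "(complex ^ ('n::finite \<times> 'n)) set" and a b :: "complex ^ 'n"
    and N :: "(complex ^ ('n \<times> 'n)) set"
  assumes wedge_in_perp: "wedge a b \<in> perp K"
    and wedge_in_N: "wedge a b \<in> N"
    and open_N: "open N"
    and scaling_invariant_N: "scaling_invariant N"
    and zero_notin_N: "0 \<notin> N"
    and decomposable_in_N: "\<And>x y. wedge x y \<in> perp K \<Longrightarrow> wedge x y \<in> N \<Longrightarrow> \<exists>\<mu>. wedge x y = \<mu> *s wedge a b"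
begin

lemma wedge_nonzero: "wedge a b \<noteq> 0"
  using wedge_in_N zero_notin_N by auto

lemma isotropic_span2: "isotropic K (span2 a b)"
  unfolding isotropic_def
  by (metis wedge_span2 perp_smult wedge_in_perp)

lemma span2_subset_resonance: "span2 a b \<subseteq> resonance K"
proof
  fix x assume "x \<in> span2 a b"
  show "x \<in> resonance K"
  proof (cases "x = 0")
    case False
    then obtain y where "wedge x y = wedge a b"
      using ex_wedge_eq_if_in_span2 \<open>x \<in> span2 a b\<close> by blast
    then have "wedge x y \<in> perp K - {0}"
      using wedge_in_perp wedge_nonzero by simp
    then show ?thesis unfolding resonance_def by blast
  qed (simp add: resonance_def)
qed

lemma wedge_in_perp_imp_multiple:
  assumes "x \<in> span2 a b" "x \<noteq> 0" "wedge x y \<in> perp K"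
  obtains \<nu> where "wedge x y = \<nu> *s wedge a b"
proof -
  obtain b' where b': "wedge x b' = wedge a b"
    using ex_wedge_eq_if_in_span2[OF assms(1,2)] .
  define z where "z = wedge x y"
  have "continuous_on UNIV (\<lambda>t. wedge a b + t *s z)"
    by (intro continuous_on_add continuous_on_vector_smult continuous_on_id continuous_on_const)
  then have "isCont (\<lambda>t. wedge a b + t *s z) 0"
    by (simp add: continuous_on_eq_continuous_at)
  then have "((\<lambda>t. wedge a b + t *s z) \<longlongrightarrow> wedge a b + 0 *s z) (at 0)"
    by (simp only: isCont_def)
  then have "((\<lambda>t. wedge a b + t *s z) \<longlongrightarrow> wedge a b) (at 0)"
    by simp
  then have "\<forall>\<^sub>F t in at 0. wedge a b + t *s z \<in> N"
    using open_N wedge_in_N by (rule topological_tendstoD)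
  then have "\<forall>\<^sub>F t in at (0::complex). t \<noteq> 0 \<and> wedge a b + t *s z \<in> N"
    by (simp add: eventually_at_filter)
  then obtain t where t: "t \<noteq> 0" "wedge a b + t *s z \<in> N"
    using eventually_happens' trivial_limit_at by blast
  have "wedge a b + t *s z = wedge x (b' + t *s y)"
    by (simp add: z_def b' wedge_add_right wedge_smult_right)
  moreover have "wedge a b + t *s z \<in> perp K"
    using wedge_in_perp assms(3) by (simp add: z_def perp_add perp_smult)
  ultimately obtain \<mu> where "wedge a b + t *s z = \<mu> *s wedge a b"
    using decomposable_in_N t(2) by metis
  then have "z = ((\<mu> - 1) / t) *s wedge a b"
    using t(1) by (simp add: vec_eq_iff field_simps)
  then show ?thesis unfolding z_def by (rule that)
qed

lemma unit_partner_wedge_in_N: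
  assumes "x \<in> span2 a b" "x $ i \<noteq> 0" "norm y = 1" "y $ i = 0" "wedge x y \<in> perp K"
  shows "wedge x y \<in> N"
proof -
  have "x \<noteq> 0" "y \<noteq> 0" using assms(2,3) by auto
  then have "wedge x y \<noteq> 0" using wedge_nonzero_if_coordinate assms(2,4) by blast
  obtain \<nu> where "wedge x y = \<nu> *s wedge a b"
    using wedge_in_perp_imp_multiple[OF assms(1) \<open>x \<noteq> 0\<close> assms(5)] .
  then show ?thesis
    using \<open>wedge x y \<noteq> 0\<close> wedge_in_N scaling_invariantD[OF scaling_invariant_N] by auto
qed

lemma in_span2_if_unit_partner_wedges_in_N:
  assumes "v \<in> resonance K" "v $ i \<noteq> 0"
    and partners: "\<And>y. norm y = 1 \<Longrightarrow> y $ i = 0 \<Longrightarrow> wedge v y \<in> perp K \<Longrightarrow> wedge v y \<in> N"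
  shows "v \<in> span2 a b"
proof -
  obtain y where y: "wedge v y \<in> perp K" "wedge v y \<noteq> 0"
    using assms(1,2) unfolding resonance_def by auto
  obtain y' c where y': "norm y' = 1" "y' $ i = 0" "c \<noteq> 0" "wedge v y' = c *s wedge v y"
    using normalize_wedge_factor[OF assms(2) y(2)] .
  have "wedge v y' \<in> perp K" "wedge v y' \<noteq> 0"
    using y y' by (simp_all add: perp_smult)
  moreover obtain \<mu> where "wedge v y' = \<mu> *s wedge a b"
    using decomposable_in_N partners[OF y'(1,2)] calculation(1) by blast
  ultimately show ?thesis
    using wedge_eq_smult_imp_in_span2 by blast
qed

lemma span2_notin_closure:
  assumes "x \<in> span2 a b" "x \<noteq> 0"
  shows "x \<notin> closure (resonance K - span2 a b)"
proof -
  obtain i where i: "x $ i \<noteq> 0" using assms(2) by (metis vec_eq_iff zero_index)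
  define P where "P = {v. \<exists>y. norm y = 1 \<and> y $ i = 0 \<and> wedge v y \<in> perp K - N}"
  define W where "W = {v. v $ i \<noteq> 0} - P"
  have "closed P"
    unfolding P_def by (intro closed_wedge_unit_partner closed_Diff closed_perp open_N)
  then have "open W"
    unfolding W_def
    by (intro open_Diff open_Collect_neq continuous_on_component continuous_on_id continuous_on_const)
  moreover have "x \<in> W"
    using i unit_partner_wedge_in_N[OF assms(1) i] by (auto simp: W_def P_def)
  moreover have "W \<inter> (resonance K - span2 a b) = {}"
    using in_span2_if_unit_partner_wedges_in_N by (auto simp: W_def P_def)
  ultimately show ?thesis
    using open_Int_closure_eq_empty by blast
qed

lemma line_openin_resonance:
  "openin (subtopology proj_topology (Presonance K)) (PP (span2 a b))"
proof -
  define B where "B = - closure (resonance K - span2 a b)"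
  have B_inv: "scaling_invariant B"
    unfolding B_def
    by (intro scaling_invariant_Compl scaling_invariant_closure scaling_invariant_Diff
        scaling_invariant_resonance scaling_invariant_span2)
  have "B \<inter> resonance K - {0} = span2 a b - {0}"
    using span2_notin_closure span2_subset_resonance closure_subset[of "resonance K - span2 a b"]
    by (auto simp: B_def)
  then have "PP (span2 a b) = PP B \<inter> Presonance K"
    unfolding Presonance_def using PP_Int[OF scaling_invariant_resonance] PP_cong_nonzero by metis
  moreover have "openin proj_topology (PP B)"
    using B_inv by (rule openin_proj_topology_PP) (auto simp: B_def)
  ultimately show ?thesis
    unfolding openin_subtopology by blast
qed

lemma line_in_connected_components:
  "PP (span2 a b) \<in> connected_components_of (subtopology proj_topology (Presonance K))"
proof (rule clopen_connectedin_in_connected_components_of)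
  have "PP (span2 a b) \<subseteq> Presonance K"
    unfolding Presonance_def by (rule PP_mono[OF span2_subset_resonance])
  then show "connectedin (subtopology proj_topology (Presonance K)) (PP (span2 a b))"
    by (simp add: connectedin_subtopology connectedin_proj_topology_PP connected_span2_minus_0 wedge_nonzero)
  have "closedin proj_topology (PP (span2 a b))"
    by (rule closedin_proj_topology_PP[OF scaling_invariant_span2])
      (simp add: insert_absorb span2_0 closed_span2)
  then show "closedin (subtopology proj_topology (Presonance K)) (PP (span2 a b))"
    using \<open>PP (span2 a b) \<subseteq> Presonance K\<close> unfolding closedin_subtopology by blast
  have "a \<noteq> 0"
    using wedge_nonzero by auto
  then show "PP (span2 a b) \<noteq> {}"
    using pt_in_PP[OF left_in_span2] by blast
qed (rule line_openin_resonance)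

end

lemma isolated_decomposable_if_isolated_point:
  assumes "isolated_point_of proj_topology (PP (perp K) \<inter> Gr2) (pt (wedge a b))"
  obtains N where "isolated_decomposable K a b N"
proof -
  obtain U where U: "openin proj_topology U" "U \<inter> (PP (perp K) \<inter> Gr2) = {pt (wedge a b)}"
    using assms unfolding isolated_point_of_def by blast
  obtain w where w: "pt (wedge a b) = pt w" "w \<in> perp K" "w \<noteq> 0"
    using U(2) unfolding PP_def by blast
  have "wedge a b \<noteq> 0"
    using w pt_self[of w] by (auto simp: pt_0)
  then have "wedge a b \<in> perp K"
    using U(2) pt_in_PP_iff[OF scaling_invariant_perp] by blast
  define N where "N = {v. v \<noteq> 0 \<and> pt v \<in> U}"
  have "isolated_decomposable K a b N"
  proof
    show "wedge a b \<in> perp K" by fact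
    show "wedge a b \<in> N" using U(2) \<open>wedge a b \<noteq> 0\<close> by (auto simp: N_def)
    show "open N" using U(1) by (simp add: N_def openin_proj_topology)
    show "scaling_invariant N" by (simp add: N_def scaling_invariant_def pt_smult)
    show "0 \<notin> N" by (simp add: N_def)
    fix x y assume "wedge x y \<in> perp K" "wedge x y \<in> N"
    then have "pt (wedge x y) \<in> U \<inter> (PP (perp K) \<inter> Gr2)"
      unfolding N_def Gr2_def by (auto intro: pt_in_PP)
    then have "pt (wedge x y) = pt (wedge a b)" using U(2) by blast
    then show "\<exists>\<mu>. wedge x y = \<mu> *s wedge a b"
      using pt_eq_pt_imp_smult \<open>wedge a b \<noteq> 0\<close> by metis
  qed
  then show ?thesis by (rule that)
qed

theorem proposition2p6:
  fixes K :: "(complex ^ ('n::finite \<times> 'n)) set" and a b :: "complex ^ 'n"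
  assumes "csubspace K" and "K \<subseteq> Alt2"
    and "isolated_point_of proj_topology (PP (perp K) \<inter> Gr2) (pt (wedge a b))"
  shows "PP (span2 a b) \<in> connected_components_of (subtopology proj_topology (Presonance K))
         \<and> isotropic K (span2 a b)"
proof -
  obtain N where "isolated_decomposable K a b N"
    using isolated_decomposable_if_isolated_point[OF assms(3)] .
  then interpret isolated_decomposable K a b N .
  show ?thesis
    using line_in_connected_components isotropic_span2 by blast
qed

end
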